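(* Let $p\ge2$, consider the multiple regression function $f(x)=(1,x^T)^T$ on the rectangular design region $\mathcal{X}=[u_1,v_1]\times\cdots\times[u_{p-1},v_{p-1}]$ with $u_i<v_i$, and let $\beta=(\beta_0,\ldots,\beta_{p-1})^T$ with $\beta_i\neq0$ for $i=1,\ldots,p-1$. Let $d=(d_1,\ldots,d_{p-1})$ with $d_i=v_i$ if $\beta_i>0$ and $d_i=u_i$ if $\beta_i<0$. For $z>0$ let $$w_p^*(z)=\frac{2}{p+\sqrt{(p-2)^2+4(p-1)e^{z}}},\qquad w_1^*(z)=\cdots=w_{p-1}^*(z)=\frac{1-w_p^*(z)}{p-1}.$$ Then the equation $z(1-w_p^*(z))=2$ has a unique solution $z^*\in(0,\infty)$. If moreover $z^*\le\min_{i=1,\ldots,p-1}|\beta_i|(v_i-u_i)$, then the design $\xi^*$ assigning weight $w_1^*(z^* )$ to each point $d-(z^*/\beta_i)e_i$, $i=1,\ldots,p-1$, and weight $w_p^*(z^* )$ to $d$ is $D_s$-optimal for $\beta_1,\ldots,\beta_{p-1}$ in the Poisson model on $\mathcal{X}$.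
   Context: $e_i$ denotes the $i$-th standard unit vector of $\mathbb{R}^{p-1}$. A design $\xi$ is a probability measure on $\mathcal{X}$ with finite support $x_1,\ldots,x_l$ and weights $w_1,\ldots,w_l\ge0$, $\sum_jw_j=1$. The Poisson information matrix is $M_{Po}(\xi;\beta)=\sum_{j=1}^l w_j\exp(f(x_j)^T\beta)f(x_j)f(x_j)^T$. Let $A^T=(0_{p-1},I_{p-1})$ (a $(p-1)\times p$ matrix, $0_{p-1}$ the zero column). $A^T\beta$ is identifiable for $\xi$ if $A=M_{Po}(\xi;\beta)H$ for some $H\in\mathbb{R}^{p\times(p-1)}$. A design $\xi^*$ is $D_s$-optimal for $\beta_1,\ldots,\beta_{p-1}$ in the Poisson model if $A^T\beta$ is identifiable for $\xi^*$ and $\det(A^TM_{Po}(\xi^*;\beta)^-A)\le\det(A^TM_{Po}(\xi;\beta)^-A)$ for all designs $\xi$ on $\mathcal{X}$ for which $A^T\beta$ is identifiable, where $^-$ denotes a generalized inverse. *)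

theory Defs
  imports "HOL-Analysis.Analysis"
begin

text \<open>Covariates x live in R^(p-1), indexed by a finite type 'n (so p - 1 = CARD('n), p >= 2).
  Vectors in R^p (regression function values, parameter beta) are indexed by 'n option,
  where None is the intercept index 0 and Some i is index i.\<close>

definition regf :: "real^'n \<Rightarrow> real^('n option)" where
  "regf x = (\<chi> j. case j of None \<Rightarrow> 1 | Some i \<Rightarrow> x $ i)"

definition supp_design :: "(real^'n \<Rightarrow> real) \<Rightarrow> (real^'n) set" where
  "supp_design w = {x. w x \<noteq> 0}"

definition is_design :: "(real^'n) set \<Rightarrow> (real^'n \<Rightarrow> real) \<Rightarrow> bool" where
  "is_design X w \<longleftrightarrow> finite (supp_design w) \<and> (\<forall>x. 0 \<le> w x)
     \<and> supp_design w \<subseteq> X \<and> sum w (supp_design w) = 1"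

definition outer :: "real^'m \<Rightarrow> real^'m^'m" where
  "outer a = (\<chi> i j. a $ i * a $ j)"

definition M_Po :: "(real^'n \<Rightarrow> real) \<Rightarrow> real^('n option) \<Rightarrow> real^('n option)^('n option)" where
  "M_Po w \<beta> = (\<Sum>x\<in>supp_design w. (w x * exp (regf x \<bullet> \<beta>)) *\<^sub>R outer (regf x))"

definition Amat :: "real^'n^('n option)" where
  "Amat = (\<chi> j i. case j of None \<Rightarrow> 0 | Some k \<Rightarrow> (if k = i then 1 else 0))"

definition identifiable :: "(real^'n \<Rightarrow> real) \<Rightarrow> real^('n option) \<Rightarrow> bool" where
  "identifiable w \<beta> \<longleftrightarrow> (\<exists>H :: real^'n^('n option). Amat = M_Po w \<beta> ** H)"

definition ginv :: "real^'m^'m \<Rightarrow> real^'m^'m \<Rightarrow> bool" where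
  "ginv M G \<longleftrightarrow> M ** G ** M = M"

definition Ds_crit :: "real^('n::finite option)^('n option) \<Rightarrow> real" where
  "Ds_crit G = det (transpose (Amat :: real^'n^('n option)) ** G ** Amat)"

definition Ds_optimal :: "(real^'n) set \<Rightarrow> real^('n option) \<Rightarrow> (real^'n \<Rightarrow> real) \<Rightarrow> bool" where
  "Ds_optimal X \<beta> w \<longleftrightarrow> is_design X w \<and> identifiable w \<beta> \<and>
     (\<forall>w'. is_design X w' \<and> identifiable w' \<beta> \<longrightarrow>
        (\<forall>G G'. ginv (M_Po w \<beta>) G \<and> ginv (M_Po w' \<beta>) G' \<longrightarrow>
            Ds_crit (G :: real^('n option)^('n option)) \<le> Ds_crit G'))"

definition wp_star :: "nat \<Rightarrow> real \<Rightarrow> real" where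
  "wp_star p z = 2 / (real p + sqrt ((real p - 2)^2 + 4 * (real p - 1) * exp z))"

definition w1_star :: "nat \<Rightarrow> real \<Rightarrow> real" where
  "w1_star p z = (1 - wp_star p z) / (real p - 1)"

end

theory Submission
  imports Defs
begin

text \<open>
  Let \<open>M\<close> be the information matrix of a design for which \<open>A\<^sup>T\<beta>\<close> is identifiable, say \<open>A = M H\<close>.
  For every generalized inverse \<open>G\<close> of \<open>M\<close> one has \<open>A\<^sup>T G A = H\<^sup>T M H =: R\<close>, and whenever
  \<open>A\<^sup>T B = I\<close> the Cauchy--Schwarz inequality for the semi-inner product of \<open>M\<close> gives
  \<open>R\<^sup>-\<^sup>1 \<le> B\<^sup>T M B\<close>. Hence for any \<open>T\<close> the trace of \<open>T R\<^sup>-\<^sup>1 T\<^sup>T\<close> is at most the mean over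
  the design of the sensitivity \<open>exp (f(x)\<^sup>T\<beta>) |T B\<^sup>T f(x)|\<^sup>2\<close>. If the sensitivity is at most
  \<open>p - 1\<close> on the whole region, Hadamard's inequality and AM--GM give \<open>det (T\<^sup>T T) \<le> det R\<close>.

  For \<open>\<xi>\<^sup>*\<close> there are \<open>B\<close> and \<open>T\<close> with \<open>M(\<xi>\<^sup>*) B T\<^sup>T T = A\<close>, so its criterion is
  \<open>det (T\<^sup>T T)\<close>. Writing \<open>s = \<Sum>\<^sub>i \<beta>\<^sub>i (x\<^sub>i - d\<^sub>i) \<le> 0\<close>, its sensitivity at \<open>x\<close> is bounded by
  \<open>exp s\<close> times a quadratic in \<open>s\<close>; on \<open>s \<le> 0\<close> this function is maximal at \<open>s = -z\<^sup>*\<close> and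
  \<open>s = 0\<close>, and the equations defining \<open>w\<^sub>p\<^sup>*\<close> and \<open>z\<^sup>*\<close> make both values equal to \<open>p - 1\<close>.
\<close>

section \<open>Positive semidefinite matrices and Hadamard's inequality\<close>

definition psd_matrix :: "real^'m^'m \<Rightarrow> bool" where
  "psd_matrix X \<longleftrightarrow> transpose X = X \<and> (\<forall>y. 0 \<le> y \<bullet> (X *v y))"

lemma matrix_vector_mult_axis_component: "((X::real^'m^'k) *v axis i c) $ r = X$r$i * c"
  by (simp add: matrix_vector_mult_def axis_def if_distrib cong: if_cong)

lemma inner_axis_matrix_vector_mult_axis: "axis i 1 \<bullet> ((X::real^'m^'m) *v axis i 1) = X$i$i"
  by (simp add: inner_axis' matrix_vector_mult_axis_component)

lemma symmetric_matrix_entry: "transpose X = X \<Longrightarrow> X$i$j = X$j$i"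
  by (metis transpose_def vec_lambda_beta)

lemma psd_matrix_diag_nonneg: "psd_matrix X \<Longrightarrow> 0 \<le> X$i$i"
  unfolding psd_matrix_def by (metis inner_axis_matrix_vector_mult_axis)

lemma psd_matrix_zero_diag_imp_zero_row:
  fixes X :: "real^'m^'m"
  assumes psd: "psd_matrix X" and "X$k$k = 0"
  shows "X$k$j = 0"
proof (rule ccontr)
  assume ne: "X$k$j \<noteq> 0"
  then have "k \<noteq> j" using assms(2) by auto
  define t where "t = - (X$j$j + 1) / (2 * X$k$j)"
  have sym: "X$j$k = X$k$j" using psd by (simp add: psd_matrix_def symmetric_matrix_entry)
  have "0 \<le> (t *\<^sub>R axis k 1 + axis j 1) \<bullet> (X *v (t *\<^sub>R axis k 1 + axis j 1))"
    using psd unfolding psd_matrix_def by blast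
  also have "\<dots> = t^2 * X$k$k + 2 * t * X$k$j + X$j$j"
    using \<open>k \<noteq> j\<close> sym
    by (simp add: matrix_vector_right_distrib matrix_vector_mult_scaleR inner_add_left inner_add_right
        inner_axis' matrix_vector_mult_axis_component algebra_simps power2_eq_square)
  also have "\<dots> = -1" using ne assms(2) by (simp add: t_def field_simps)
  finally show False by simp
qed

lemma psd_matrix_congruence:
  fixes X :: "real^'m^'m" and L :: "real^'m^'k"
  assumes "psd_matrix X"
  shows "psd_matrix (L ** X ** transpose L)"
proof -
  have "transpose X = X" using assms psd_matrix_def by blast
  then have "transpose (L ** X ** transpose L) = L ** X ** transpose L"
    by (simp add: matrix_transpose_mul matrix_mul_assoc)
  moreover have "0 \<le> y \<bullet> ((L ** X ** transpose L) *v y)" for y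
  proof -
    have "y \<bullet> ((L ** X ** transpose L) *v y) = (transpose L *v y) \<bullet> (X *v (transpose L *v y))"
      by (simp add: matrix_vector_mul_assoc[symmetric] dot_lmul_matrix[symmetric])
    then show ?thesis using assms unfolding psd_matrix_def by simp
  qed
  ultimately show ?thesis unfolding psd_matrix_def by blast
qed

definition elim_matrix :: "real^'m^'m \<Rightarrow> 'm \<Rightarrow> real^'m^'m" where
  "elim_matrix X k = (\<chi> i j. (if i = j then 1 else 0) + (if j = k \<and> i \<noteq> k then - X$i$k / X$k$k else 0))"

lemma det_elim_matrix: "det (elim_matrix (X::real^'m^'m) k) = 1"
proof -
  define u where "u = (\<chi> j. if j \<noteq> k then - X$j$k / X$k$k else 0)"
  have tr: "transpose (elim_matrix X k) = (\<chi> i. if i = k then row k (mat 1) + u else row i (mat 1))"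
    by (auto simp: vec_eq_iff transpose_def elim_matrix_def u_def row_def mat_def)
  have "u = (\<Sum>j\<in>UNIV - {k}. (- X$j$k / X$k$k) *s row j (mat 1))"
    by (auto simp: vec_eq_iff u_def row_def mat_def if_distrib sum.delta' cong: if_cong)
  also have "\<dots> \<in> vec.span {row j (mat 1 :: real^'m^'m) |j. j \<noteq> k}"
    by (intro vec.span_sum vec.span_scale vec.span_base) auto
  finally have "det (transpose (elim_matrix X k)) = det (mat 1 :: real^'m^'m)"
    unfolding tr by (rule det_row_span)
  then show ?thesis by simp
qed

lemma elim_matrix_congruence_entry:
  fixes X :: "real^'m^'m"
  assumes sym: "transpose X = X" and "X$k$k \<noteq> 0"
  shows "(elim_matrix X k ** X ** transpose (elim_matrix X k)) $ i $ j =
    (if i = k \<or> j = k then (if i = j then X$k$k else 0) else X$i$j - X$i$k * X$k$j / X$k$k)"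
proof -
  define c where "c i = (if i \<noteq> k then - X$i$k / X$k$k else 0)" for i
  have left: "(elim_matrix X k ** Y) $ i $ j = Y$i$j + c i * Y$k$j" for Y :: "real^'m^'m" and i j
  proof -
    have "(elim_matrix X k ** Y) $ i $ j
        = (\<Sum>m\<in>UNIV. (if m = i then Y$m$j else 0) + (if m = k then c i * Y$m$j else 0))"
      by (auto simp: matrix_matrix_mult_def elim_matrix_def c_def distrib_right intro!: sum.cong)
    then show ?thesis by (simp add: sum.distrib)
  qed
  have right: "(Y ** transpose (elim_matrix X k)) $ i $ j = Y$i$j + c j * Y$i$k" for Y :: "real^'m^'m" and i j
  proof -
    have "(Y ** transpose (elim_matrix X k)) $ i $ j
        = (\<Sum>m\<in>UNIV. (if m = j then Y$i$m else 0) + (if m = k then c j * Y$i$m else 0))"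
      by (auto simp: matrix_matrix_mult_def elim_matrix_def transpose_def c_def distrib_left
          intro!: sum.cong)
    then show ?thesis by (simp add: sum.distrib)
  qed
  have "X$k$j - X$j$k / X$k$k * X$k$k = 0"
    using assms symmetric_matrix_entry[OF sym, of k j] by simp
  then show ?thesis
    using assms by (auto simp: left right c_def)
qed

text \<open>Induction on the set \<open>S\<close> of indices still carrying off-diagonal entries: a symmetric
  elimination step removes one index, keeps the determinant and can only decrease the diagonal.\<close>

lemma psd_matrix_det_bounds_induct:
  fixes X :: "real^'m^'m"
  assumes "psd_matrix X" and "\<And>i j. i \<noteq> j \<Longrightarrow> i \<notin> S \<or> j \<notin> S \<Longrightarrow> X$i$j = 0"
  shows "0 \<le> det X \<and> det X \<le> (\<Prod>i\<in>UNIV. X$i$i)"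
  using finite[of S] assms
proof (induction S arbitrary: X rule: finite_induct)
  case empty
  then have "det X = (\<Prod>i\<in>UNIV. X$i$i)" by (intro det_diagonal) simp
  moreover have "0 \<le> (\<Prod>i\<in>UNIV. X$i$i)" using empty psd_matrix_diag_nonneg by (intro prod_nonneg) auto
  ultimately show ?case by simp
next
  case (insert k S)
  have psd: "psd_matrix X" by fact
  have prod_nonneg: "0 \<le> (\<Prod>i\<in>UNIV. X$i$i)" using psd psd_matrix_diag_nonneg by (intro prod_nonneg) auto
  show ?case
  proof (cases "X$k$k = 0")
    case True
    then have "row k X = 0"
      using psd_matrix_zero_diag_imp_zero_row[OF psd] by (simp add: row_def vec_eq_iff)
    then show ?thesis using prod_nonneg by (simp add: det_zero_row(2))
  next
    case False
    define X' where "X' = elim_matrix X k ** X ** transpose (elim_matrix X k)"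
    have X': "X'$i$j = (if i = k \<or> j = k then (if i = j then X$k$k else 0)
        else X$i$j - X$i$k * X$k$j / X$k$k)" for i j
      unfolding X'_def using psd False by (intro elim_matrix_congruence_entry) (auto simp: psd_matrix_def)
    have psd': "psd_matrix X'" unfolding X'_def using psd by (rule psd_matrix_congruence)
    have "X'$i$j = 0" if "i \<noteq> j" "i \<notin> S \<or> j \<notin> S" for i j
      using that insert.prems(2) by (auto simp: X')
    then have IH: "0 \<le> det X' \<and> det X' \<le> (\<Prod>i\<in>UNIV. X'$i$i)"
      by (rule insert.IH[OF psd'])
    have "det X' = det X" by (simp add: X'_def det_mul det_elim_matrix)
    moreover have "X'$i$i \<le> X$i$i" for i
    proof -
      have "0 \<le> X$i$k * X$i$k / X$k$k"
        using psd_matrix_diag_nonneg[OF psd, of k] by simp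
      then show ?thesis using psd by (auto simp: X' psd_matrix_def symmetric_matrix_entry[of X k i])
    qed
    then have "(\<Prod>i\<in>UNIV. X'$i$i) \<le> (\<Prod>i\<in>UNIV. X$i$i)"
      by (intro prod_mono) (use psd_matrix_diag_nonneg[OF psd'] in auto)
    ultimately show ?thesis using IH by simp
  qed
qed

lemma psd_matrix_det_nonneg: "psd_matrix X \<Longrightarrow> 0 \<le> det X"
  using psd_matrix_det_bounds_induct[of X UNIV] by blast

lemma hadamard_inequality: "psd_matrix X \<Longrightarrow> det X \<le> (\<Prod>i\<in>UNIV. X$i$i)"
  using psd_matrix_det_bounds_induct[of X UNIV] by blast

lemma psd_matrix_det_le_1:
  fixes X :: "real^'m^'m"
  assumes psd: "psd_matrix X" and tr: "trace X \<le> real CARD('m)"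
  shows "det X \<le> 1"
proof -
  have diag: "\<And>i. 0 \<le> X$i$i" using psd_matrix_diag_nonneg[OF psd] by blast
  have "(\<Prod>i\<in>UNIV. X$i$i) powr (1 / real CARD('m)) \<le> (\<Sum>i\<in>UNIV. X$i$i / real CARD('m))"
    using arith_geom_mean[of "UNIV :: 'm set" "\<lambda>i. X$i$i"] diag by simp
  also have "\<dots> = trace X / real CARD('m)" by (simp add: trace_def sum_divide_distrib)
  also have "\<dots> \<le> 1" using tr by (simp add: divide_le_eq)
  finally have "(\<Prod>i\<in>UNIV. X$i$i) \<le> 1"
    using diag by (metis gr_one_powr linorder_not_le of_nat_0_less_iff prod_nonneg zero_less_card_finite
        zero_less_divide_1_iff)
  then show ?thesis using hadamard_inequality[OF psd] by simp
qed

lemma psd_matrix_right_inverse: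
  fixes R U :: "real^'m^'m"
  assumes psd: "psd_matrix R" and RU: "R ** U = mat 1"
  shows "psd_matrix U"
proof -
  have "transpose U = transpose U ** R ** U"
    by (simp add: matrix_mul_assoc[symmetric] RU)
  then have "psd_matrix (transpose U)"
    using psd_matrix_congruence[OF psd, of "transpose U"] by simp
  then show ?thesis by (metis psd_matrix_def transpose_transpose)
qed

lemma det_transpose_mult_le_of_trace_inverse_le:
  fixes R U T :: "real^'m^'m"
  assumes psd: "psd_matrix R" and UR: "U ** R = mat 1"
    and trace: "trace (T ** U ** transpose T) \<le> real CARD('m)"
  shows "det (transpose T ** T) \<le> det R"
proof -
  have "psd_matrix U"
    using psd UR matrix_left_right_inverse by (blast intro: psd_matrix_right_inverse)
  then have "det T * det U * det T \<le> 1"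
    using psd_matrix_det_le_1[OF psd_matrix_congruence, of U T] trace by (simp add: det_mul)
  have "det U * det R = 1" using UR by (metis det_I det_mul)
  then have "det (transpose T ** T) = (det T * det U * det T) * det R"
    by (simp add: det_mul det_transpose ac_simps)
  also have "\<dots> \<le> 1 * det R"
    using \<open>det T * det U * det T \<le> 1\<close> psd_matrix_det_nonneg[OF psd] by (rule mult_right_mono)
  finally show ?thesis by simp
qed

section \<open>Moment matrices and a lower bound for the \<open>D\<^sub>s\<close>-criterion\<close>

definition moment_matrix :: "'x set \<Rightarrow> ('x \<Rightarrow> real) \<Rightarrow> ('x \<Rightarrow> real^'m) \<Rightarrow> real^'m^'m" where
  "moment_matrix S c f = (\<Sum>x\<in>S. c x *\<^sub>R outer (f x))"

lemma M_Po_eq_moment_matrix: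
  "M_Po w \<beta> = moment_matrix (supp_design w) (\<lambda>x. w x * exp (regf x \<bullet> \<beta>)) regf"
  by (simp add: M_Po_def moment_matrix_def)

lemma transpose_moment_matrix: "transpose (moment_matrix S c f) = moment_matrix S c f"
  by (simp add: vec_eq_iff transpose_def moment_matrix_def outer_def mult.commute)

lemma moment_matrix_mult_vec:
  "moment_matrix S c f *v v = (\<Sum>x\<in>S. (c x * (f x \<bullet> v)) *\<^sub>R f x)"
proof -
  have "(moment_matrix S c f *v v) $ i = (\<Sum>x\<in>S. (c x * (f x \<bullet> v)) *\<^sub>R f x) $ i" for i
  proof -
    have "(moment_matrix S c f *v v) $ i = (\<Sum>j\<in>UNIV. (\<Sum>x\<in>S. c x * (f x $ i * f x $ j)) * v $ j)"
      by (simp add: matrix_vector_mult_def moment_matrix_def outer_def)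
    also have "\<dots> = (\<Sum>x\<in>S. (c x * (f x \<bullet> v)) * f x $ i)"
      by (simp add: sum_distrib_right sum.swap[of _ UNIV S] inner_vec_def sum_distrib_left mult_ac)
    finally show ?thesis by simp
  qed
  then show ?thesis by (simp add: vec_eq_iff)
qed

lemma inner_moment_matrix:
  "u \<bullet> (moment_matrix S c f *v v) = (\<Sum>x\<in>S. c x * (f x \<bullet> u) * (f x \<bullet> v))"
  by (simp add: moment_matrix_mult_vec inner_sum_right inner_commute mult_ac)

lemma moment_matrix_mult_entry:
  "(moment_matrix S c f ** Y) $ j $ l = (\<Sum>x\<in>S. c x * f x $ j * (f x \<bullet> column l Y))"
proof -
  have "(moment_matrix S c f ** Y) $ j $ l = (\<Sum>m\<in>UNIV. (\<Sum>x\<in>S. c x * (f x $ j * f x $ m)) * Y $ m $ l)"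
    by (simp add: matrix_matrix_mult_def moment_matrix_def outer_def)
  also have "\<dots> = (\<Sum>x\<in>S. c x * f x $ j * (f x \<bullet> column l Y))"
    by (simp add: sum_distrib_right sum_distrib_left sum.swap[of _ UNIV S] inner_vec_def column_def mult_ac)
  finally show ?thesis .
qed

lemma inner_column_matrix_mult:
  fixes y :: "real^'m" and B :: "real^'k^'m" and C :: "real^'l^'k"
  shows "y \<bullet> column l (B ** C) = (transpose B *v y) \<bullet> column l C"
proof -
  have "y \<bullet> column l (B ** C) = (\<Sum>m\<in>UNIV. \<Sum>i\<in>UNIV. y $ m * B $ m $ i * C $ i $ l)"
    by (simp add: inner_vec_def column_def matrix_matrix_mult_def sum_distrib_left mult_ac)
  also have "\<dots> = (\<Sum>i\<in>UNIV. \<Sum>m\<in>UNIV. y $ m * B $ m $ i * C $ i $ l)"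
    by (rule sum.swap)
  also have "\<dots> = (transpose B *v y) \<bullet> column l C"
    by (simp add: inner_vec_def column_def matrix_vector_mult_def transpose_def sum_distrib_left
        sum_distrib_right mult_ac)
  finally show ?thesis .
qed

lemma psd_moment_matrix:
  assumes "\<And>x. x \<in> S \<Longrightarrow> 0 \<le> c x"
  shows "psd_matrix (moment_matrix S c f)"
  unfolding psd_matrix_def transpose_moment_matrix inner_moment_matrix
  using assms by (auto intro!: sum_nonneg simp: mult.assoc)

lemma moment_matrix_mult_vec_eq_0:
  assumes "finite S" "\<And>x. x \<in> S \<Longrightarrow> 0 \<le> c x" "v \<bullet> (moment_matrix S c f *v v) = 0"
  shows "moment_matrix S c f *v v = 0"
proof -
  have "\<forall>x\<in>S. c x * ((f x \<bullet> v) * (f x \<bullet> v)) = 0"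
    using assms by (subst sum_nonneg_eq_0_iff[symmetric]) (auto simp: inner_moment_matrix mult.assoc)
  then show ?thesis
    unfolding moment_matrix_mult_vec by (intro sum.neutral) auto
qed

lemma weighted_Cauchy_Schwarz:
  fixes c :: "'x \<Rightarrow> real"
  assumes "\<And>x. x \<in> S \<Longrightarrow> 0 \<le> c x"
  shows "(\<Sum>x\<in>S. c x * a x * b x)^2 \<le> (\<Sum>x\<in>S. c x * (a x)^2) * (\<Sum>x\<in>S. c x * (b x)^2)"
proof -
  have "(\<Sum>x\<in>S. (sqrt (c x) * a x) * (sqrt (c x) * b x))^2
     \<le> (\<Sum>x\<in>S. (sqrt (c x) * a x)^2) * (\<Sum>x\<in>S. (sqrt (c x) * b x)^2)"
    by (rule Cauchy_Schwarz_ineq_sum)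
  moreover have "(\<Sum>x\<in>S. (sqrt (c x) * a x) * (sqrt (c x) * b x)) = (\<Sum>x\<in>S. c x * a x * b x)"
    using assms by (intro sum.cong) (auto simp: mult_ac)
  moreover have "(\<Sum>x\<in>S. (sqrt (c x) * g x)^2) = (\<Sum>x\<in>S. c x * (g x)^2)" for g
    using assms by (intro sum.cong) (auto simp: power_mult_distrib)
  ultimately show ?thesis by simp
qed

lemma inner_congruence_mult_vec:
  fixes K :: "real^'a^'b" and N :: "real^'b^'b"
  shows "y \<bullet> ((transpose K ** N ** K) *v y) = (K *v y) \<bullet> (N *v (K *v y))"
proof -
  have "y \<bullet> ((transpose K ** N ** K) *v y) = (y v* transpose K) \<bullet> (N *v (K *v y))"
    by (metis matrix_vector_mul_assoc dot_lmul_matrix)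
  then show ?thesis by (simp only: vector_transpose_matrix)
qed

lemma ginv_congruence:
  fixes M G :: "real^'m^'m" and H :: "real^'q^'m"
  assumes "transpose M = M" "M ** G ** M = M"
  shows "transpose (M ** H) ** G ** (M ** H) = transpose H ** M ** H"
proof -
  have "transpose (M ** H) ** G ** (M ** H) = transpose H ** (transpose M ** G ** M) ** H"
    by (simp add: matrix_transpose_mul matrix_mul_assoc)
  then show ?thesis using assms by simp
qed

lemma ginv_criterion_eq:
  fixes M G :: "real^'m^'m" and A B :: "real^'q^'m" and C :: "real^'q^'q"
  assumes "transpose M = M" "M ** G ** M = M"
    and "A = M ** (B ** C)" "transpose A ** B = mat 1" "transpose C = C"
  shows "transpose A ** G ** A = C"
proof -
  have "transpose (B ** C) ** M ** (B ** C) = transpose C ** (transpose B ** A)"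
    using assms(1,3) by (simp add: matrix_transpose_mul matrix_mul_assoc)
  also have "transpose B ** A = mat 1"
    using assms(4) by (metis matrix_transpose_mul transpose_mat transpose_transpose)
  finally show ?thesis
    using ginv_congruence[OF assms(1,2), of "B ** C"] assms(3,5) by simp
qed

lemma inverse_form_le_moment_form:
  fixes S :: "'x set" and c :: "'x \<Rightarrow> real" and f :: "'x \<Rightarrow> real^'m"
    and H B :: "real^'q^'m" and U :: "real^'q^'q"
  defines "M \<equiv> moment_matrix S c f"
  assumes c_nonneg: "\<And>x. x \<in> S \<Longrightarrow> 0 \<le> c x"
    and HMB: "transpose H ** M ** B = mat 1"
    and inverse: "(transpose H ** M ** H) ** U = mat 1"
  shows "y \<bullet> (U *v y) \<le> (B *v y) \<bullet> (M *v (B *v y))"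
proof -
  define x where "x = U *v y"
  define \<alpha> where "\<alpha> = (H *v x) \<bullet> (M *v (H *v x))"
  define \<gamma> where "\<gamma> = (B *v y) \<bullet> (M *v (B *v y))"
  have "(transpose H ** M ** H) *v x = y"
    by (simp add: x_def matrix_vector_mul_assoc inverse)
  then have "\<alpha> = x \<bullet> y"
    unfolding \<alpha>_def by (metis inner_congruence_mult_vec)
  also have "x \<bullet> y = (H *v x) \<bullet> (M *v (B *v y))"
    by (metis HMB dot_lmul_matrix matrix_vector_mul_assoc
        matrix_vector_mul_lid vector_transpose_matrix)
  finally have \<alpha>_eq: "\<alpha> = (H *v x) \<bullet> (M *v (B *v y))" .
  have "\<alpha>^2 \<le> \<alpha> * \<gamma>"
  proof -
    have "\<alpha>^2 = (\<Sum>s\<in>S. c s * (f s \<bullet> (H *v x)) * (f s \<bullet> (B *v y)))^2"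
      by (simp add: \<alpha>_eq M_def inner_moment_matrix)
    also have "\<dots> \<le> (\<Sum>s\<in>S. c s * (f s \<bullet> (H *v x))^2) * (\<Sum>s\<in>S. c s * (f s \<bullet> (B *v y))^2)"
      using c_nonneg by (rule weighted_Cauchy_Schwarz)
    also have "\<dots> = \<alpha> * \<gamma>"
      by (simp add: \<alpha>_def \<gamma>_def M_def inner_moment_matrix power2_eq_square mult_ac)
    finally show ?thesis .
  qed
  moreover have "0 \<le> \<alpha>" "0 \<le> \<gamma>"
    using psd_moment_matrix[of S c f] c_nonneg by (simp_all add: \<alpha>_def \<gamma>_def M_def psd_matrix_def)
  ultimately have "\<alpha> \<le> \<gamma>"
    by (cases "\<alpha> = 0") (auto simp: power2_eq_square)
  moreover have "y \<bullet> (U *v y) = \<alpha>"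
    using \<open>\<alpha> = x \<bullet> y\<close> by (simp add: x_def inner_commute)
  ultimately show ?thesis by (simp add: \<gamma>_def)
qed

lemma trace_congruence_le_sensitivity_sum:
  fixes S :: "'x set" and c :: "'x \<Rightarrow> real" and f :: "'x \<Rightarrow> real^'m"
    and H B :: "real^'q^'m" and U :: "real^'q^'q" and T :: "real^'q^'k"
  defines "M \<equiv> moment_matrix S c f"
  assumes c_nonneg: "\<And>x. x \<in> S \<Longrightarrow> 0 \<le> c x"
    and HMB: "transpose H ** M ** B = mat 1"
    and inverse: "(transpose H ** M ** H) ** U = mat 1"
  shows "trace (T ** U ** transpose T)
    \<le> (\<Sum>x\<in>S. c x * ((T *v (transpose B *v f x)) \<bullet> (T *v (transpose B *v f x))))"
proof -
  define g where "g x = T *v (transpose B *v f x)" for x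
  have diag: "(T ** U ** transpose T) $ k $ k \<le> (\<Sum>x\<in>S. c x * (g x $ k)^2)" for k
  proof -
    define e where "e = transpose T *v axis k 1"
    have "(T ** U ** transpose T) $ k $ k = e \<bullet> (U *v e)"
      using inner_congruence_mult_vec[of "axis k 1" "transpose T" U]
      by (simp add: e_def inner_axis_matrix_vector_mult_axis)
    also have "\<dots> \<le> (B *v e) \<bullet> (M *v (B *v e))"
      unfolding M_def
      by (rule inverse_form_le_moment_form[OF c_nonneg HMB[unfolded M_def] inverse[unfolded M_def]])
    also have "\<dots> = (\<Sum>x\<in>S. c x * (f x \<bullet> (B *v e))^2)"
      by (simp add: M_def inner_moment_matrix power2_eq_square mult_ac)
    also have "\<dots> = (\<Sum>x\<in>S. c x * (g x $ k)^2)"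
    proof (intro sum.cong refl)
      fix x
      have "f x \<bullet> (B *v e) = ((f x v* B) v* transpose T) \<bullet> axis k 1"
        unfolding e_def by (simp only: dot_lmul_matrix)
      also have "\<dots> = (T *v (transpose B *v f x)) \<bullet> axis k 1"
        by (simp only: vector_transpose_matrix transpose_matrix_vector)
      finally show "c x * (f x \<bullet> (B *v e))^2 = c x * (g x $ k)^2"
        by (simp add: g_def inner_axis)
    qed
    finally show ?thesis .
  qed
  have "trace (T ** U ** transpose T) \<le> (\<Sum>k\<in>UNIV. \<Sum>x\<in>S. c x * (g x $ k)^2)"
    unfolding trace_def by (intro sum_mono diag)
  also have "\<dots> = (\<Sum>x\<in>S. c x * (g x \<bullet> g x))"
    by (simp add: sum.swap[of _ UNIV S] sum_distrib_left inner_vec_def power2_eq_square)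
  finally show ?thesis by (simp add: g_def)
qed

lemma Ds_criterion_lower_bound:
  fixes S :: "'x set" and c :: "'x \<Rightarrow> real" and f :: "'x \<Rightarrow> real^'m"
    and A B H :: "real^'q^'m" and T :: "real^'q^'q" and G :: "real^'m^'m"
  defines "M \<equiv> moment_matrix S c f"
  assumes fin: "finite S" and c_nonneg: "\<And>x. x \<in> S \<Longrightarrow> 0 \<le> c x"
    and A_inj: "\<And>y. A *v y = 0 \<Longrightarrow> y = 0"
    and AB: "transpose A ** B = mat 1"
    and AMH: "A = M ** H"
    and ginv: "M ** G ** M = M"
    and sensitivity: "(\<Sum>x\<in>S. c x * ((T *v (transpose B *v f x)) \<bullet> (T *v (transpose B *v f x))))
      \<le> real CARD('q)"
  shows "det (transpose T ** T) \<le> det (transpose A ** G ** A)"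
proof -
  define R where "R = transpose H ** M ** H"
  have M_sym: "transpose M = M" by (simp add: M_def transpose_moment_matrix)
  have psd_M: "psd_matrix M" unfolding M_def using c_nonneg by (rule psd_moment_matrix)
  have R_eq: "transpose A ** G ** A = R"
    unfolding AMH R_def using M_sym ginv by (rule ginv_congruence)
  have psd_R: "psd_matrix R"
    using psd_matrix_congruence[OF psd_M, of "transpose H"] by (simp add: R_def)
  have "y = 0" if "R *v y = 0" for y
  proof -
    have "(H *v y) \<bullet> (M *v (H *v y)) = 0"
      using that inner_congruence_mult_vec[of y H M] by (simp add: R_def)
    then have "M *v (H *v y) = 0"
      unfolding M_def using fin c_nonneg by (rule moment_matrix_mult_vec_eq_0[rotated 2])
    then show "y = 0" by (intro A_inj) (simp add: AMH matrix_vector_mul_assoc)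
  qed
  then obtain U where UR: "U ** R = mat 1"
    using matrix_left_invertible_ker[of R] by blast
  have HMB: "transpose H ** M ** B = mat 1"
    using AB by (simp add: AMH matrix_transpose_mul M_sym)
  have "trace (T ** U ** transpose T) \<le> real CARD('q)"
    using trace_congruence_le_sensitivity_sum[OF c_nonneg HMB[unfolded M_def], of U T]
      matrix_left_right_inverse[THEN iffD1, OF UR] sensitivity by (simp add: R_def M_def)
  with psd_R UR have "det (transpose T ** T) \<le> det R"
    by (rule det_transpose_mult_le_of_trace_inverse_le)
  then show ?thesis by (simp add: R_eq)
qed

section \<open>The weights \<open>w\<^sub>p\<^sup>*\<close> and the equation for \<open>z\<^sup>*\<close>\<close>

lemma wp_star_denominator_pos:
  "2 \<le> p \<Longrightarrow> 0 < real p + sqrt ((real p - 2)^2 + 4 * (real p - 1) * exp z)"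
  by (intro add_pos_nonneg real_sqrt_ge_zero add_nonneg_nonneg) auto

lemma wp_star_pos: "2 \<le> p \<Longrightarrow> 0 < wp_star p z"
  unfolding wp_star_def using wp_star_denominator_pos by simp

text \<open>The formula defining \<open>wp_star p z\<close> is the positive root of this quadratic equation.\<close>

lemma wp_star_quadratic:
  assumes "2 \<le> p"
  shows "(1 - wp_star p z) * (1 - (real p - 1) * wp_star p z) = (real p - 1) * (wp_star p z)^2 * exp z"
proof -
  define \<sigma> where "\<sigma> = sqrt ((real p - 2)^2 + 4 * (real p - 1) * exp z)"
  define D where "D = real p + \<sigma>"
  define q where "q = real p - 1"
  have "0 < D" unfolding D_def \<sigma>_def using assms by (rule wp_star_denominator_pos)
  have "\<sigma>^2 = (real p - 2)^2 + 4 * (real p - 1) * exp z"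
    unfolding \<sigma>_def using assms by (intro real_sqrt_pow2 add_nonneg_nonneg) auto
  then have "(D - 2) * (D - 2 * q) = 4 * q * exp z"
    unfolding D_def q_def by (simp add: algebra_simps power2_eq_square)
  moreover have wp: "wp_star p z = 2 / D" by (simp add: wp_star_def D_def \<sigma>_def)
  ultimately show ?thesis
    unfolding q_def[symmetric] wp using \<open>0 < D\<close> by (simp add: field_simps power2_eq_square)
qed

lemma wp_star_mult_lt_1:
  assumes "2 \<le> p" "0 < z"
  shows "real p * wp_star p z < 1"
proof -
  have "4 * (real p - 1) * 1 < 4 * (real p - 1) * exp z"
    using assms by (intro mult_strict_left_mono) auto
  then have "(real p)^2 < (real p - 2)^2 + 4 * (real p - 1) * exp z"
    by (simp add: power2_eq_square algebra_simps)
  then have "real p < sqrt ((real p - 2)^2 + 4 * (real p - 1) * exp z)"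
    using real_less_rsqrt by blast
  then show ?thesis
    using wp_star_denominator_pos[OF assms(1), of z] by (simp add: wp_star_def field_simps)
qed

lemma wp_star_strict_antimono:
  assumes "2 \<le> p" "z1 < z2"
  shows "wp_star p z2 < wp_star p z1"
proof -
  have "sqrt ((real p - 2)^2 + 4 * (real p - 1) * exp z1) < sqrt ((real p - 2)^2 + 4 * (real p - 1) * exp z2)"
    using assms by simp
  then show ?thesis
    unfolding wp_star_def using wp_star_denominator_pos[OF assms(1)]
    by (intro divide_strict_left_mono) (auto intro: mult_pos_pos)
qed

lemma ex1_solution_z_equation:
  assumes "2 \<le> p"
  shows "\<exists>!z. 0 < z \<and> z * (1 - wp_star p z) = 2"
proof -
  define g where "g z = z * (1 - wp_star p z)" for z
  have g_strict_mono: "g z1 < g z2" if "0 < z1" "z1 < z2" for z1 z2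
  proof -
    have "wp_star p z2 < wp_star p z1" using wp_star_strict_antimono[OF assms] that by simp
    moreover have "real p * wp_star p z1 < 1" using wp_star_mult_lt_1[OF assms] that by simp
    moreover have "wp_star p z1 \<le> real p * wp_star p z1"
      using assms wp_star_pos[OF assms, of z1] by simp
    ultimately show ?thesis using that unfolding g_def
      by (smt (verit) mult_strict_left_mono mult_strict_right_mono)
  qed
  have "continuous_on {0..4} g"
    unfolding g_def wp_star_def using wp_star_denominator_pos[OF assms]
    by (intro continuous_intros) (auto simp: less_imp_neq[symmetric])
  moreover have "2 \<le> g 4"
  proof -
    have "2 * wp_star p 4 \<le> real p * wp_star p 4"
      using assms wp_star_pos[OF assms, of 4] by (intro mult_right_mono) auto
    then show ?thesis using wp_star_mult_lt_1[OF assms, of 4] by (simp add: g_def)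
  qed
  moreover have "g 0 \<le> 2" by (simp add: g_def)
  ultimately obtain z where z: "0 \<le> z" "g z = 2"
    using IVT'[of g 0 2 4] by auto
  then have "0 < z" by (cases "z = 0") (auto simp: g_def)
  show ?thesis
  proof (rule ex1I[of _ z])
    show "0 < z \<and> z * (1 - wp_star p z) = 2" using \<open>0 < z\<close> z by (simp add: g_def)
    fix y assume y: "0 < y \<and> y * (1 - wp_star p y) = 2"
    then have "g y = g z" using z by (simp add: g_def)
    then show "y = z"
      using g_strict_mono[of y z] g_strict_mono[of z y] \<open>0 < z\<close> y
      by (cases y z rule: linorder_cases) auto
  qed
qed

lemma le_max_of_two_critical_points:
  fixes h h' :: "real \<Rightarrow> real"
  assumes deriv: "\<And>t. (h has_real_derivative h' t) (at t)"
    and outside: "\<And>t. t \<le> r1 \<or> r2 \<le> t \<Longrightarrow> 0 \<le> h' t"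
    and between: "\<And>t. r1 \<le> t \<Longrightarrow> t \<le> r2 \<Longrightarrow> h' t \<le> 0"
    and "s \<le> b"
  shows "h s \<le> max (h r1) (h b)"
proof -
  have incr: "\<exists>y. (h has_real_derivative y) (at t) \<and> 0 \<le> y" if "t \<le> r1 \<or> r2 \<le> t" for t
    using deriv outside[OF that] by blast
  have decr: "\<exists>y. (h has_real_derivative y) (at t) \<and> y \<le> 0" if "r1 \<le> t" "t \<le> r2" for t
    using deriv between[OF that] by blast
  consider "s \<le> r1" | "r1 \<le> s" "s \<le> r2" | "r2 \<le> s"
    by linarith
  then show ?thesis
  proof cases
    case 1
    then have "h s \<le> h r1"
      by (rule DERIV_nonneg_imp_nondecreasing) (rule incr; simp)
    then show ?thesis by simp
  next
    case 2
    have "h s \<le> h r1"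
      by (rule DERIV_nonpos_imp_nonincreasing[OF 2(1)]) (rule decr; use 2 in simp)
    then show ?thesis by simp
  next
    case 3
    have "h s \<le> h b"
      using \<open>s \<le> b\<close> by (rule DERIV_nonneg_imp_nondecreasing) (use 3 in \<open>intro incr; simp\<close>)
    then show ?thesis by simp
  qed
qed

lemma exp_mult_quadratic_critical_points:
  fixes q a z c r :: real
  assumes c_def: "c = 1 - (q - 1) * a" and r_def: "r = - (q * z^2 * a^2 + 2 * z * a) / (c * z)"
    and a_pos: "0 < a" and a_less: "(q + 1) * a < 1" and z_pos: "0 < z"
    and z_eq: "z * (1 - a) = 2"
  shows "0 < c" and "-z \<le> r"
    and "((\<lambda>t. exp t * (c * t^2 + 2 * z * a * t + q * z^2 * a^2))
      has_real_derivative exp t * (c * (t + z) * (t - r))) (at t)"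
proof -
  have "(q - 1) * a \<le> (q + 1) * a" using a_pos by (intro mult_right_mono) auto
  then show c_pos: "0 < c" unfolding c_def using a_less by linarith
  have cr: "c * r = - (q * z * a^2 + 2 * a)"
    unfolding r_def using c_pos z_pos by (simp add: field_simps power2_eq_square)
  have "c * z + q * z * a^2 + 2 * a - (2 * z * a + 2 * c) = (c - a) * (z * (1 - a) - 2)"
    unfolding c_def by (simp add: algebra_simps power2_eq_square)
  then have sum_roots: "c * z + q * z * a^2 + 2 * a = 2 * z * a + 2 * c" using z_eq by simp
  have "c * (t + z) * (t - r) = c * t^2 + (c * z) * t - (c * r) * t - z * (c * r)"
    by (simp add: algebra_simps power2_eq_square)
  also have "\<dots> = c * t^2 + (2 * z * a + 2 * c) * t + q * z^2 * a^2 + 2 * z * a"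
    unfolding cr sum_roots[symmetric] by (simp add: algebra_simps power2_eq_square)
  finally have factor: "c * t^2 + (2 * z * a + 2 * c) * t + q * z^2 * a^2 + 2 * z * a = c * (t + z) * (t - r)" ..
  have "((\<lambda>t. exp t * (c * t^2 + 2 * z * a * t + q * z^2 * a^2)) has_real_derivative
      exp t * (c * t^2 + (2 * z * a + 2 * c) * t + q * z^2 * a^2 + 2 * z * a)) (at t)"
    by (auto intro!: derivative_eq_intros simp: power2_eq_square algebra_simps)
  then show "((\<lambda>t. exp t * (c * t^2 + 2 * z * a * t + q * z^2 * a^2))
      has_real_derivative exp t * (c * (t + z) * (t - r))) (at t)"
    by (simp only: factor)
  have "a * ((q - 1) * a) \<le> a * (1 - 2 * a)"
    using a_less a_pos by (intro mult_left_mono) (auto simp: algebra_simps)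
  then have "a + (q - 1) * a^2 \<le> c"
    unfolding c_def using a_less
    by (simp add: algebra_simps power2_eq_square) (use zero_le_square[of a] in linarith)
  moreover have "q * z * a^2 + 2 * a = z * (a + (q - 1) * a^2)"
    using arg_cong[OF z_eq, of "\<lambda>y. a * y"] by (simp add: algebra_simps power2_eq_square)
  ultimately have "q * z * a^2 + 2 * a \<le> c * z"
    using z_pos by (simp add: mult.commute mult_left_mono)
  then have "0 \<le> c * (z + r)" using cr by (simp add: algebra_simps)
  then show "-z \<le> r" using c_pos by (simp add: zero_le_mult_iff)
qed

text \<open>On \<open>s \<le> 0\<close> the maximum is attained at \<open>s = -z\<close> and at \<open>s = 0\<close>; the equation for \<open>a\<close>
  makes the two values coincide.\<close>

lemma exp_mult_quadratic_le:
  fixes q a z s :: real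
  assumes a_pos: "0 < a" and a_less: "(q + 1) * a < 1" and z_pos: "0 < z"
    and z_eq: "z * (1 - a) = 2" and a_eq: "(1 - a) * (1 - q * a) = q * a^2 * exp z"
    and "s \<le> 0"
  shows "exp s * ((1 - (q - 1) * a) * s^2 + 2 * z * a * s + q * z^2 * a^2) \<le> q * z^2 * a^2"
proof -
  define c where "c = 1 - (q - 1) * a"
  define r where "r = - (q * z^2 * a^2 + 2 * z * a) / (c * z)"
  define h where "h t = exp t * (c * t^2 + 2 * z * a * t + q * z^2 * a^2)" for t
  note critical = exp_mult_quadratic_critical_points[OF c_def r_def a_pos a_less z_pos z_eq,
      folded h_def]
  have "h s \<le> max (h (-z)) (h 0)"
  proof (rule le_max_of_two_critical_points[OF critical(3) _ _ \<open>s \<le> 0\<close>])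
    fix t assume "t \<le> -z \<or> r \<le> t"
    then have "0 \<le> (t + z) * (t - r)"
      using critical(2) by (elim disjE) (simp_all add: mult_nonpos_nonpos)
    then show "0 \<le> exp t * (c * (t + z) * (t - r))" using critical(1) by (simp add: mult.assoc)
  next
    fix t assume "-z \<le> t" "t \<le> r"
    then have "(t + z) * (t - r) \<le> 0" by (intro mult_nonneg_nonpos) auto
    then show "exp t * (c * (t + z) * (t - r)) \<le> 0"
      using critical(1) by (simp add: mult.assoc mult_nonneg_nonpos)
  qed
  moreover have "h (-z) = q * z^2 * a^2"
  proof -
    have "h (-z) = exp (-z) * z^2 * ((1 - a) * (1 - q * a))"
      by (simp add: h_def c_def algebra_simps power2_eq_square)
    also have "\<dots> = exp (-z) * exp z * (q * z^2 * a^2)" by (simp only: a_eq) (simp add: algebra_simps)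
    also have "\<dots> = q * z^2 * a^2" by (simp add: exp_minus)
    finally show ?thesis .
  qed
  moreover have "h 0 = q * z^2 * a^2" by (simp add: h_def)
  ultimately show ?thesis by (simp add: h_def c_def)
qed

section \<open>The optimal design\<close>

lemma sum_option_UNIV:
  "(\<Sum>m\<in>(UNIV :: 'a::finite option set). g m) = g None + (\<Sum>i\<in>UNIV. g (Some i))"
  by (simp add: UNIV_option_conv sum.reindex)

lemma regf_None [simp]: "regf x $ None = 1"
  by (simp add: regf_def)

lemma regf_Some [simp]: "regf x $ Some i = x $ i"
  by (simp add: regf_def)

lemma inner_regf: "regf x \<bullet> \<beta> = \<beta> $ None + (\<Sum>i\<in>UNIV. x $ i * \<beta> $ Some i)"
  by (simp add: inner_vec_def sum_option_UNIV)

lemma Amat_mult_vec_eq_0: "(Amat :: real^'n^('n option)) *v y = 0 \<Longrightarrow> y = 0"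
proof -
  assume y: "(Amat :: real^'n^('n option)) *v y = 0"
  have "((Amat :: real^'n^('n option)) *v y) $ Some i = y $ i" for i
    by (simp add: matrix_vector_mult_def Amat_def if_distrib[of "\<lambda>c. c * _"] cong: if_cong)
  then show "y = 0" using y by (simp add: vec_eq_iff)
qed

lemma sum_squares_le_square_sum_nonpos:
  fixes t :: "'a \<Rightarrow> real"
  assumes "finite S" "\<And>i. i \<in> S \<Longrightarrow> t i \<le> 0"
  shows "(\<Sum>i\<in>S. (t i)^2) \<le> (\<Sum>i\<in>S. t i)^2"
  using assms
proof (induction S rule: finite_induct)
  case (insert k S)
  then have "0 \<le> t k * (\<Sum>i\<in>S. t i)"
    by (intro mult_nonpos_nonpos sum_nonpos) auto
  then show ?case using insert by (simp add: power2_eq_square algebra_simps)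
qed simp

locale corner_design =
  fixes u v :: "real^'n" and \<beta> :: "real^('n option)" and z :: real
  assumes lower_less_upper: "\<forall>i. u $ i < v $ i"
    and slope_nonzero: "\<forall>i. \<beta> $ Some i \<noteq> 0"
    and z_pos: "0 < z"
    and z_eq: "z * (1 - wp_star (CARD('n) + 1) z) = 2"
    and z_le_width: "\<forall>i. z \<le> \<bar>\<beta> $ Some i\<bar> * (v $ i - u $ i)"
begin

definition "q = real CARD('n)"
definition "wp = wp_star (CARD('n) + 1) z"
definition "w1 = w1_star (CARD('n) + 1) z"
definition "b i = \<beta> $ Some i"
definition "X = {x :: real^'n. \<forall>i. u $ i \<le> x $ i \<and> x $ i \<le> v $ i}"
definition "d = ((\<chi> i. if \<beta> $ Some i > 0 then v $ i else u $ i) :: real^'n)"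
definition "P i = d - (z / \<beta> $ Some i) *\<^sub>R axis i 1"
definition "\<xi> x = (if x = d then wp else 0) + (\<Sum>i\<in>UNIV. if x = P i then w1 else 0)"

lemma q_ge_1: "1 \<le> q"
  by (simp add: q_def)

lemma b_nonzero: "b i \<noteq> 0"
  using slope_nonzero by (simp add: b_def)

lemma wp_pos: "0 < wp"
  unfolding wp_def by (rule wp_star_pos) simp

lemma wp_less: "(q + 1) * wp < 1"
  using wp_star_mult_lt_1[of "CARD('n) + 1" z] z_pos by (simp add: wp_def q_def add.commute)

lemma q_wp_less_1: "q * wp < 1"
  using wp_less wp_pos by (simp add: algebra_simps)

lemma wp_eq: "(1 - wp) * (1 - q * wp) = q * wp^2 * exp z"
  using wp_star_quadratic[of "CARD('n) + 1" z] by (simp add: wp_def q_def)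

lemma z_wp_eq: "z * (1 - wp) = 2"
  using z_eq by (simp add: wp_def)

lemma w1_eq: "w1 = (1 - wp) / q"
  by (simp add: w1_def w1_star_def wp_def q_def)

lemma w1_pos: "0 < w1"
proof -
  have "wp \<le> q * wp" using q_ge_1 wp_pos by simp
  then show ?thesis using q_wp_less_1 q_ge_1 by (simp add: w1_eq)
qed

lemma w1_wp_eq: "w1 * (1 - q * wp) = wp^2 * exp z"
  using wp_eq q_ge_1 by (simp add: w1_eq field_simps)

lemma weights_sum: "wp + q * w1 = 1"
  using q_ge_1 by (simp add: w1_eq)

lemma P_component: "P k $ i = d $ i - (if i = k then z / b k else 0)"
  by (simp add: P_def b_def axis_def)

lemma P_neq_d: "P k \<noteq> d"
proof
  assume "P k = d"
  then have "P k $ k = d $ k" by simp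
  then show False using z_pos b_nonzero[of k] by (simp add: P_component)
qed

lemma P_eq_iff: "P k = P l \<longleftrightarrow> k = l"
proof
  assume "P k = P l"
  then have "P k $ k = P l $ k" by simp
  then show "k = l" using z_pos b_nonzero[of k] by (auto simp: P_component split: if_splits)
qed simp

lemma \<xi>_d: "\<xi> d = wp"
  using P_neq_d by (simp add: \<xi>_def eq_commute[of d])

lemma \<xi>_P: "\<xi> (P k) = w1"
proof -
  have "(\<Sum>i\<in>UNIV. if P k = P i then w1 else 0) = (\<Sum>i\<in>UNIV. if i = k then w1 else 0)"
    by (intro sum.cong) (auto simp: P_eq_iff)
  then show ?thesis using P_neq_d by (simp add: \<xi>_def)
qed

lemma supp_design_\<xi>: "supp_design \<xi> = insert d (range P)"
proof -
  have "\<xi> x = 0" if "x \<noteq> d" "x \<notin> range P" for x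
    using that by (auto simp: \<xi>_def intro!: sum.neutral)
  then show ?thesis
    using wp_pos w1_pos by (auto simp: supp_design_def \<xi>_d \<xi>_P)
qed

lemma d_in_X: "d \<in> X"
  using lower_less_upper by (auto simp: X_def d_def less_imp_le)

lemma P_in_X: "P k \<in> X"
proof -
  have width: "z \<le> \<bar>b k\<bar> * (v $ k - u $ k)" using z_le_width by (simp add: b_def)
  have "u $ k \<le> P k $ k \<and> P k $ k \<le> v $ k"
  proof (cases "b k > 0")
    case True
    then have "z / b k \<le> v $ k - u $ k" using width by (simp add: pos_divide_le_eq mult.commute)
    moreover have "0 < z / b k" using True z_pos by simp
    ultimately show ?thesis using True by (simp add: P_component d_def b_def)
  next
    case False
    then have neg: "0 < - b k" using b_nonzero[of k] by linarith
    then have "z \<le> (v $ k - u $ k) * (- b k)" using width by (simp add: mult.commute)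
    then have "z / (- b k) \<le> v $ k - u $ k" using pos_divide_le_eq[OF neg] by blast
    moreover have "0 < z / (- b k)" using neg z_pos by (intro divide_pos_pos)
    ultimately show ?thesis using False by (simp add: P_component d_def b_def)
  qed
  then show ?thesis using d_in_X by (auto simp: X_def P_component)
qed

lemma is_design_\<xi>: "is_design X \<xi>"
proof -
  have "d \<notin> range P" using P_neq_d by (metis rangeE)
  then have "sum \<xi> (supp_design \<xi>) = \<xi> d + (\<Sum>k\<in>UNIV. \<xi> (P k))"
    unfolding supp_design_\<xi> by (simp add: sum.reindex inj_on_def P_eq_iff)
  also have "\<dots> = 1" using weights_sum by (simp add: \<xi>_d \<xi>_P q_def)
  finally have "sum \<xi> (supp_design \<xi>) = 1" .
  moreover have "0 \<le> \<xi> x" for x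
    unfolding \<xi>_def using wp_pos w1_pos by (intro add_nonneg_nonneg sum_nonneg) auto
  moreover have "supp_design \<xi> \<subseteq> X" using d_in_X P_in_X by (auto simp: supp_design_\<xi>)
  ultimately show ?thesis by (simp add: is_design_def supp_design_\<xi>)
qed

text \<open>\<open>C\<close> will be the value of \<open>A\<^sup>T M(\<xi>)\<^sup>- A\<close>, \<open>T\<close> is a square root \<open>T\<^sup>T T = C\<close>, and \<open>B\<close> is the
  left inverse of \<open>A\<^sup>T\<close> for which \<open>M(\<xi>) B C = A\<close>.\<close>

definition "\<eta>\<^sub>0 = regf d \<bullet> \<beta>"
definition "\<tau> = exp (- \<eta>\<^sub>0 / 2) / (z * wp)"
definition "\<rho> = sqrt (1 - q * wp)"
definition "\<nu> = (1 - \<rho>) / q"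

definition B :: "real^'n^('n option)" where
  "B = (\<chi> j l. case j of None \<Rightarrow> z * wp / b l - d $ l | Some m \<Rightarrow> if m = l then 1 else 0)"

definition C :: "real^'n^'n" where
  "C = (\<chi> i l. \<tau>^2 * b i * b l * ((1 - q * wp) * (if i = l then 1 else 0) + wp))"

definition T :: "real^'n^'n" where
  "T = (\<chi> k j. \<tau> * (\<rho> * (if k = j then 1 else 0) + \<nu>) * b j)"

lemma tau_sq: "\<tau>^2 * exp \<eta>\<^sub>0 * z^2 * wp^2 = 1"
proof -
  have "exp (- \<eta>\<^sub>0 / 2)^2 = exp (- \<eta>\<^sub>0)"
    by (subst exp_double[symmetric]) simp
  then have "exp (- \<eta>\<^sub>0 / 2)^2 * exp \<eta>\<^sub>0 = 1"
    by (simp add: exp_minus)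
  then show ?thesis
    using z_pos wp_pos by (simp add: \<tau>_def power_divide power_mult_distrib)
qed

lemma rho_sq: "\<rho>^2 = 1 - q * wp"
  using q_wp_less_1 by (simp add: \<rho>_def)

lemma rho_nu_eq: "2 * \<rho> * \<nu> + q * \<nu>^2 = wp"
proof -
  have "2 * \<rho> * \<nu> + q * \<nu>^2 = (1 - \<rho>^2) / q"
    using q_ge_1 by (simp add: \<nu>_def field_simps power2_eq_square)
  then show ?thesis using q_ge_1 by (simp add: rho_sq)
qed

lemma transpose_Amat_mult_B: "transpose (Amat :: real^'n^('n option)) ** B = mat 1"
proof -
  have "(transpose (Amat :: real^'n^('n option)) ** B) $ i $ l
      = (\<Sum>m\<in>UNIV. (if m = i then 1 else 0) * (if m = l then 1 else 0))" for i l
    by (simp add: matrix_matrix_mult_def transpose_def Amat_def sum_option_UNIV B_def)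
  also have "\<dots> i l = (\<Sum>m\<in>UNIV. if m = i then (if i = l then 1 else 0) else 0)" for i l
    by (rule sum.cong) auto
  finally show ?thesis by (simp add: vec_eq_iff mat_def)
qed

lemma transpose_C: "transpose C = C"
  by (simp add: vec_eq_iff transpose_def C_def mult_ac eq_commute)

lemma C_eq_transpose_T_mult_T: "C = transpose T ** T"
proof -
  have "(transpose T ** T) $ i $ l = C $ i $ l" for i l
  proof -
    have "(transpose T ** T) $ i $ l = \<tau>^2 * b i * b l *
        (\<Sum>k\<in>UNIV. (\<rho> * (if k = i then 1 else 0) + \<nu>) * (\<rho> * (if k = l then 1 else 0) + \<nu>))"
      by (simp add: matrix_matrix_mult_def transpose_def T_def power2_eq_square sum_distrib_left mult_ac)
    also have "(\<Sum>k\<in>UNIV. (\<rho> * (if k = i then 1 else 0) + \<nu>) * (\<rho> * (if k = l then 1 else 0) + \<nu>))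
       = (\<Sum>k\<in>UNIV. (if k = i then (if i = l then \<rho>^2 else 0) else 0)
        + (if k = i then \<rho> * \<nu> else 0) + (if k = l then \<rho> * \<nu> else 0) + \<nu>^2)"
      by (rule sum.cong) (auto simp: algebra_simps power2_eq_square)
    also have "\<dots> = \<rho>^2 * (if i = l then 1 else 0) + (2 * \<rho> * \<nu> + q * \<nu>^2)"
      by (simp add: sum.distrib q_def)
    finally show ?thesis by (simp add: C_def rho_nu_eq rho_sq)
  qed
  then show ?thesis by (simp add: vec_eq_iff)
qed

lemma transpose_B_mult_regf: "b i * (transpose B *v regf x) $ i = z * wp + b i * (x $ i - d $ i)"
proof -
  have "(transpose B *v regf x) $ i = z * wp / b i - d $ i + (\<Sum>m\<in>UNIV. if m = i then x $ m else 0)"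
    by (simp add: matrix_vector_mult_def transpose_def sum_option_UNIV B_def if_distrib[of "\<lambda>c. c * _"]
        cong: if_cong)
  then show ?thesis using b_nonzero[of i] by (simp add: field_simps)
qed

lemma inner_regf_column_BC:
  fixes x :: "real^'n"
  defines "g i \<equiv> z * wp + b i * (x $ i - d $ i)"
  shows "regf x \<bullet> column l (B ** C) = \<tau>^2 * b l * ((1 - q * wp) * g l + wp * (\<Sum>i\<in>UNIV. g i))"
proof -
  define y where "y = transpose B *v regf x"
  have y: "b i * y $ i = g i" for i
    unfolding y_def g_def by (rule transpose_B_mult_regf)
  have "regf x \<bullet> column l (B ** C) = (\<Sum>i\<in>UNIV. y $ i * C $ i $ l)"
    unfolding y_def inner_column_matrix_mult by (simp add: inner_vec_def column_def)
  also have "\<dots> = (\<Sum>i\<in>UNIV. (\<tau>^2 * b l * (1 - q * wp)) * (if i = l then g i else 0)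
      + (\<tau>^2 * b l * wp) * g i)"
  proof (intro sum.cong refl)
    fix i
    have "y $ i * C $ i $ l = (b i * y $ i) * (\<tau>^2 * b l * ((1 - q * wp) * (if i = l then 1 else 0) + wp))"
      by (simp add: C_def mult_ac)
    also have "\<dots> = g i * (\<tau>^2 * b l * ((1 - q * wp) * (if i = l then 1 else 0) + wp))"
      by (simp only: y)
    also have "\<dots> = (\<tau>^2 * b l * (1 - q * wp)) * (if i = l then g i else 0) + (\<tau>^2 * b l * wp) * g i"
      by (simp add: algebra_simps)
    finally show "y $ i * C $ i $ l
        = (\<tau>^2 * b l * (1 - q * wp)) * (if i = l then g i else 0) + (\<tau>^2 * b l * wp) * g i" .
  qed
  also have "\<dots> = \<tau>^2 * b l * ((1 - q * wp) * g l + wp * (\<Sum>i\<in>UNIV. g i))"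
    by (simp add: sum.distrib sum_distrib_left[symmetric]) (simp add: algebra_simps)
  finally show ?thesis .
qed

lemma inner_regf_P: "regf (P k) \<bullet> \<beta> = \<eta>\<^sub>0 - z"
proof -
  have "(\<Sum>i\<in>UNIV. P k $ i * \<beta> $ Some i) = (\<Sum>i\<in>UNIV. d $ i * \<beta> $ Some i - (if i = k then z else 0))"
    using b_nonzero by (intro sum.cong) (auto simp: P_component b_def left_diff_distrib)
  then show ?thesis by (simp add: \<eta>\<^sub>0_def inner_regf sum_subtractf)
qed

lemma regf_d_minus_regf_P: "regf d $ j - regf (P l) $ j = (if j = Some l then z / b l else 0)"
  by (cases j) (auto simp: P_component)

lemma inner_regf_d_column_BC: "regf d \<bullet> column l (B ** C) = \<tau>^2 * b l * z * wp"
  by (simp add: inner_regf_column_BC q_def[symmetric] algebra_simps)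

lemma inner_regf_P_column_BC:
  "regf (P k) \<bullet> column l (B ** C) = - (\<tau>^2 * b l * (1 - q * wp) * z * (if k = l then 1 else 0))"
proof -
  have "(\<Sum>i\<in>UNIV. z * wp + b i * (P k $ i - d $ i)) = (\<Sum>i\<in>UNIV. z * wp - (if i = k then z else 0))"
    using b_nonzero by (intro sum.cong) (auto simp: P_component)
  also have "\<dots> = q * (z * wp) - z"
    by (simp add: sum_subtractf q_def)
  finally have sum_g: "(\<Sum>i\<in>UNIV. z * wp + b i * (P k $ i - d $ i)) = q * (z * wp) - z" .
  have g_l: "z * wp + b l * (P k $ l - d $ l) = z * wp - (if k = l then z else 0)"
    using b_nonzero[of l] by (simp add: P_component)
  show ?thesis
    unfolding inner_regf_column_BC sum_g g_l by (simp add: algebra_simps)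
qed

lemma M_Po_\<xi>_mult_BC: "M_Po \<xi> \<beta> ** (B ** C) = Amat"
proof -
  have "(M_Po \<xi> \<beta> ** (B ** C)) $ j $ l = Amat $ j $ l" for j l
  proof -
    have "d \<notin> range P" using P_neq_d by (metis rangeE)
    then have "(M_Po \<xi> \<beta> ** (B ** C)) $ j $ l
        = wp * exp \<eta>\<^sub>0 * regf d $ j * (\<tau>^2 * b l * z * wp)
          + (\<Sum>k\<in>UNIV. w1 * exp (\<eta>\<^sub>0 - z) * regf (P k) $ j
              * - (\<tau>^2 * b l * (1 - q * wp) * z * (if k = l then 1 else 0)))"
      by (simp add: M_Po_eq_moment_matrix moment_matrix_mult_entry supp_design_\<xi> sum.reindex
          inj_on_def P_eq_iff \<xi>_d \<xi>_P inner_regf_d_column_BC inner_regf_P_column_BC inner_regf_P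
          \<eta>\<^sub>0_def[symmetric])
    also have "\<dots> = wp * exp \<eta>\<^sub>0 * regf d $ j * (\<tau>^2 * b l * z * wp)
        - (w1 * (1 - q * wp)) * exp (- z) * exp \<eta>\<^sub>0 * regf (P l) $ j * (\<tau>^2 * b l * z)"
      by (simp add: if_distrib sum.delta exp_diff exp_minus field_simps cong: if_cong)
    also have "\<dots> = (\<tau>^2 * exp \<eta>\<^sub>0 * wp^2) * z * b l * (regf d $ j - regf (P l) $ j)"
      by (simp add: w1_wp_eq exp_minus field_simps power2_eq_square)
    also have "\<dots> = Amat $ j $ l"
      using tau_sq b_nonzero[of l] z_pos
      by (auto simp: regf_d_minus_regf_P Amat_def field_simps power2_eq_square split: option.split)
    finally show ?thesis .
  qed
  then show ?thesis by (simp add: vec_eq_iff)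
qed

lemma inner_T_mult_vec:
  "(T *v y) \<bullet> (T *v y)
    = \<tau>^2 * ((1 - q * wp) * (\<Sum>k\<in>UNIV. (b k * y $ k)^2) + wp * (\<Sum>k\<in>UNIV. b k * y $ k)^2)"
proof -
  define W where "W = (\<Sum>j\<in>UNIV. b j * y $ j)"
  have T_y: "(T *v y) $ k = \<tau> * (\<rho> * (b k * y $ k) + \<nu> * W)" for k
  proof -
    have "(T *v y) $ k
        = (\<Sum>j\<in>UNIV. (\<tau> * \<rho>) * (if k = j then b j * y $ j else 0) + (\<tau> * \<nu>) * (b j * y $ j))"
      by (auto simp: matrix_vector_mult_def T_def algebra_simps intro!: sum.cong)
    also have "\<dots> = (\<tau> * \<rho>) * (b k * y $ k) + (\<tau> * \<nu>) * W"
      by (simp only: sum.distrib sum_distrib_left[symmetric] W_def) simp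
    finally show ?thesis by (simp add: algebra_simps)
  qed
  have "(T *v y) \<bullet> (T *v y) = (\<Sum>k\<in>UNIV. (\<tau>^2 * \<rho>^2) * (b k * y $ k)^2
      + (2 * \<tau>^2 * \<rho> * \<nu> * W) * (b k * y $ k) + \<tau>^2 * \<nu>^2 * W^2)"
    by (simp add: inner_vec_def T_y power2_eq_square algebra_simps)
  also have "\<dots> = \<tau>^2 * (\<rho>^2 * (\<Sum>k\<in>UNIV. (b k * y $ k)^2) + (2 * \<rho> * \<nu> + q * \<nu>^2) * W^2)"
    by (simp add: sum.distrib sum_distrib_left[symmetric] W_def[symmetric] q_def)
      (simp add: algebra_simps power2_eq_square)
  finally show ?thesis by (simp add: rho_sq rho_nu_eq W_def)
qed

lemma slope_mult_offset_nonpos: "x \<in> X \<Longrightarrow> b i * (x $ i - d $ i) \<le> 0"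
  by (cases "b i > 0") (auto simp: X_def d_def b_def mult_nonneg_nonpos mult_nonpos_nonneg)

lemma inner_regf_eq: "regf x \<bullet> \<beta> = \<eta>\<^sub>0 + (\<Sum>i\<in>UNIV. b i * (x $ i - d $ i))"
  by (simp add: \<eta>\<^sub>0_def inner_regf b_def sum.distrib[symmetric] algebra_simps)

lemma inner_T_mult_transpose_B_regf_le:
  fixes x :: "real^'n"
  defines "s \<equiv> \<Sum>i\<in>UNIV. b i * (x $ i - d $ i)"
  assumes "x \<in> X"
  shows "(T *v (transpose B *v regf x)) \<bullet> (T *v (transpose B *v regf x))
    \<le> \<tau>^2 * ((1 - (q - 1) * wp) * s^2 + 2 * z * wp * s + q * z^2 * wp^2)"
proof -
  define t where "t i = b i * (x $ i - d $ i)" for i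
  have s_eq: "s = (\<Sum>i\<in>UNIV. t i)" by (simp add: s_def t_def)
  have w: "b i * (transpose B *v regf x) $ i = z * wp + t i" for i
    unfolding t_def by (rule transpose_B_mult_regf)
  have "(\<Sum>k\<in>UNIV. (t k)^2) \<le> s^2"
    unfolding s_eq using slope_mult_offset_nonpos[OF assms(2)]
    by (intro sum_squares_le_square_sum_nonpos) (auto simp: t_def)
  moreover have "(\<Sum>k\<in>UNIV. (z * wp + t k)^2) = q * z^2 * wp^2 + 2 * z * wp * s + (\<Sum>k\<in>UNIV. (t k)^2)"
    by (simp add: power2_eq_square algebra_simps sum.distrib sum_distrib_left sum_distrib_right s_eq q_def)
  ultimately have "(\<Sum>k\<in>UNIV. (z * wp + t k)^2) \<le> q * z^2 * wp^2 + 2 * z * wp * s + s^2"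
    by linarith
  then have "(1 - q * wp) * (\<Sum>k\<in>UNIV. (z * wp + t k)^2)
      \<le> (1 - q * wp) * (q * z^2 * wp^2 + 2 * z * wp * s + s^2)"
    using q_wp_less_1 by (intro mult_left_mono) auto
  moreover have "(\<Sum>k\<in>UNIV. z * wp + t k) = q * z * wp + s"
    by (simp add: sum.distrib s_eq q_def)
  ultimately have "(1 - q * wp) * (\<Sum>k\<in>UNIV. (z * wp + t k)^2) + wp * (\<Sum>k\<in>UNIV. z * wp + t k)^2
      \<le> (1 - q * wp) * (q * z^2 * wp^2 + 2 * z * wp * s + s^2) + wp * (q * z * wp + s)^2"
    by simp
  also have "\<dots> = (1 - (q - 1) * wp) * s^2 + 2 * z * wp * s + q * z^2 * wp^2"
    by (simp add: algebra_simps power2_eq_square)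
  finally show ?thesis
    unfolding inner_T_mult_vec w by (simp add: mult_left_mono)
qed

lemma sensitivity_le:
  assumes "x \<in> X"
  shows "exp (regf x \<bullet> \<beta>) * ((T *v (transpose B *v regf x)) \<bullet> (T *v (transpose B *v regf x))) \<le> q"
proof -
  define s where "s = (\<Sum>i\<in>UNIV. b i * (x $ i - d $ i))"
  define Q where "Q = (1 - (q - 1) * wp) * s^2 + 2 * z * wp * s + q * z^2 * wp^2"
  have "s \<le> 0"
    unfolding s_def using slope_mult_offset_nonpos[OF assms] by (intro sum_nonpos) auto
  have "exp (regf x \<bullet> \<beta>) * ((T *v (transpose B *v regf x)) \<bullet> (T *v (transpose B *v regf x)))
      \<le> (exp (regf x \<bullet> \<beta>) * \<tau>^2) * Q"
    using inner_T_mult_transpose_B_regf_le[OF assms] by (simp add: s_def Q_def mult.assoc mult_left_mono)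
  also have "\<dots> = exp s * Q / (z^2 * wp^2)"
    using tau_sq z_pos wp_pos by (simp add: inner_regf_eq s_def exp_add field_simps)
  also have "\<dots> \<le> q * z^2 * wp^2 / (z^2 * wp^2)"
    using exp_mult_quadratic_le[OF wp_pos wp_less z_pos z_wp_eq wp_eq \<open>s \<le> 0\<close>] unfolding Q_def
    by (intro divide_right_mono) auto
  also have "\<dots> = q" using z_pos wp_pos by simp
  finally show ?thesis .
qed

lemma sensitivity_sum_le:
  assumes "is_design X w"
  shows "(\<Sum>x\<in>supp_design w. w x * exp (regf x \<bullet> \<beta>) *
    ((T *v (transpose B *v regf x)) \<bullet> (T *v (transpose B *v regf x)))) \<le> real CARD('n)"
proof -
  have "(\<Sum>x\<in>supp_design w. w x * exp (regf x \<bullet> \<beta>) *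
      ((T *v (transpose B *v regf x)) \<bullet> (T *v (transpose B *v regf x)))) \<le> (\<Sum>x\<in>supp_design w. w x * q)"
    using assms sensitivity_le
    by (intro sum_mono) (auto simp: is_design_def mult.assoc intro: mult_left_mono)
  also have "\<dots> = q" using assms by (simp add: is_design_def sum_distrib_right[symmetric])
  finally show ?thesis by (simp add: q_def)
qed

lemma Ds_optimal_\<xi>: "Ds_optimal X \<beta> \<xi>"
  unfolding Ds_optimal_def
proof (intro conjI allI impI)
  show "is_design X \<xi>" by (rule is_design_\<xi>)
  show "identifiable \<xi> \<beta>" unfolding identifiable_def using M_Po_\<xi>_mult_BC by metis
  fix w G G'
  assume w: "is_design X w \<and> identifiable w \<beta>"
    and ginvs: "ginv (M_Po \<xi> \<beta>) G \<and> ginv (M_Po w \<beta>) G'"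
  have "Ds_crit G = det C"
    using ginv_criterion_eq[OF _ _ M_Po_\<xi>_mult_BC[symmetric] transpose_Amat_mult_B transpose_C] ginvs
    by (simp add: Ds_crit_def ginv_def M_Po_eq_moment_matrix transpose_moment_matrix)
  also have "\<dots> \<le> Ds_crit G'"
  proof -
    obtain H where "(Amat :: real^'n^('n option)) = M_Po w \<beta> ** H"
      using w by (auto simp: identifiable_def)
    then have "det (transpose T ** T) \<le> Ds_crit G'"
      unfolding Ds_crit_def
      using w ginvs sensitivity_sum_le
      by (intro Ds_criterion_lower_bound[where S = "supp_design w" and f = regf and B = B])
        (auto simp: is_design_def ginv_def M_Po_eq_moment_matrix Amat_mult_vec_eq_0
          transpose_Amat_mult_B)
    then show ?thesis by (simp add: C_eq_transpose_T_mult_T)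
  qed
  finally show "Ds_crit G \<le> Ds_crit G'" .
qed

end

theorem theorem9:
  fixes u v :: "real^'n" and \<beta> :: "real^('n option)"
  defines "p \<equiv> CARD('n) + 1"
  defines "X \<equiv> {x :: real^'n. \<forall>i. u $ i \<le> x $ i \<and> x $ i \<le> v $ i}"
  defines "d \<equiv> (\<chi> i. if \<beta> $ Some i > 0 then v $ i else u $ i) :: real^'n"
  assumes uv: "\<forall>i. u $ i < v $ i"
  assumes beta_nz: "\<forall>i. \<beta> $ Some i \<noteq> 0"
  shows "(\<exists>!z. 0 < z \<and> z * (1 - wp_star p z) = 2) \<and>
    (\<forall>z. 0 < z \<and> z * (1 - wp_star p z) = 2 \<and> (\<forall>i. z \<le> \<bar>\<beta> $ Some i\<bar> * (v $ i - u $ i)) \<longrightarrow>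
       Ds_optimal X \<beta>
         (\<lambda>x. (if x = d then wp_star p z else 0) +
              (\<Sum>i\<in>UNIV. if x = d - (z / \<beta> $ Some i) *\<^sub>R axis i 1 then w1_star p z else 0)))"
proof (intro conjI allI impI)
  show "\<exists>!z. 0 < z \<and> z * (1 - wp_star p z) = 2"
    unfolding p_def by (rule ex1_solution_z_equation) simp
  fix z
  assume "0 < z \<and> z * (1 - wp_star p z) = 2 \<and> (\<forall>i. z \<le> \<bar>\<beta> $ Some i\<bar> * (v $ i - u $ i))"
  then interpret D: corner_design u v \<beta> z
    using uv beta_nz by unfold_locales (auto simp: p_def)
  show "Ds_optimal X \<beta>
      (\<lambda>x. (if x = d then wp_star p z else 0) +
           (\<Sum>i\<in>UNIV. if x = d - (z / \<beta> $ Some i) *\<^sub>R axis i 1 then w1_star p z else 0))"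
    using D.Ds_optimal_\<xi>
    unfolding X_def d_def p_def D.X_def D.d_def D.wp_def D.w1_def D.P_def D.\<xi>_def[abs_def] .
qed

end
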